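(* For any ideal marking $\mathcal I=(I_1,\dots,I_p)$ of $\mathbb D$, there are at most $p-2$ unordered pairs $\{m,n\}$ of non-adjacent indices with $\overline{\mathcal W}_{mn}>2$ (i.e. at most $p-2$ non-degenerate truncated quadrilaterals $\Pi_{mn}$).
   Context: An ideal marking of $\mathbb D$ of cardinality $p$ is a tiling of the unit circle into closed arcs $I_1,\dots,I_p$ in cyclic order, indices in $\mathbb Z/p\mathbb Z$; $m,n$ are adjacent if $|m-n|\le 1$ in $\mathbb Z/p\mathbb Z$. For non-adjacent $m,n$, $\overline{\mathcal W}_{mn}$ is the extremal width of the family of paths in $\mathbb D$ joining $I_m$ to $I_n$. When $\overline{\mathcal W}_{mn}>2$, $\Pi_{mn}$ is obtained from $\mathbb D$, uniformized as the rectangle $(0,\overline{\mathcal W}_{mn})\times(0,1)$ with $I_m$ at the bottom and $I_n$ at the top, by removing the two end unit squares. *)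

theory Defs
  imports "HOL-Analysis.Analysis"
begin

text \<open>Indices 0..p-1 represent Z/pZ.\<close>

definition ideal_marking :: "nat \<Rightarrow> (nat \<Rightarrow> real) \<Rightarrow> bool" where
  "ideal_marking p \<theta> \<longleftrightarrow> p \<ge> 1 \<and> (\<forall>k<p. \<theta> k < \<theta> (Suc k)) \<and> \<theta> p = \<theta> 0 + 2 * pi"

definition marking_arc :: "(nat \<Rightarrow> real) \<Rightarrow> nat \<Rightarrow> complex set" where
  "marking_arc \<theta> k = (\<lambda>t. cis t) ` {\<theta> k .. \<theta> (Suc k)}"

definition adjacent_mod :: "nat \<Rightarrow> nat \<Rightarrow> nat \<Rightarrow> bool" where
  "adjacent_mod p m n \<longleftrightarrow> m = n \<or> Suc m mod p = n \<or> Suc n mod p = m"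

definition joining_paths :: "complex set \<Rightarrow> complex set \<Rightarrow> (real \<Rightarrow> complex) set" where
  "joining_paths A B = {\<gamma>. valid_path \<gamma> \<and> \<gamma> 0 \<in> A \<and> \<gamma> 1 \<in> B \<and> \<gamma> ` {0<..<1} \<subseteq> ball 0 1}"

definition rho_length :: "(complex \<Rightarrow> real) \<Rightarrow> (real \<Rightarrow> complex) \<Rightarrow> ennreal" where
  "rho_length \<rho> \<gamma> = (\<integral>\<^sup>+ t\<in>{0..1}. ennreal (\<rho> (\<gamma> t) * norm (vector_derivative \<gamma> (at t))) \<partial>lborel)"

definition admissible_metric :: "(real \<Rightarrow> complex) set \<Rightarrow> (complex \<Rightarrow> real) \<Rightarrow> bool" where
  "admissible_metric \<Gamma> \<rho> \<longleftrightarrow> \<rho> \<in> borel_measurable borel \<and> (\<forall>z. \<rho> z \<ge> 0)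
     \<and> (\<forall>\<gamma>\<in>\<Gamma>. rho_length \<rho> \<gamma> \<ge> 1)"

definition extremal_width :: "(real \<Rightarrow> complex) set \<Rightarrow> ennreal" where
  "extremal_width \<Gamma> = (INF \<rho>\<in>{\<rho>. admissible_metric \<Gamma> \<rho>}. \<integral>\<^sup>+ z. ennreal ((\<rho> z)\<^sup>2) \<partial>lborel)"

end

theory Submission
  imports Defs
begin

(* Let m < k < n < l and let \<mu> be the cross-ratio of the endpoints of I_m and I_n. A Moebius
   map sends the disc onto the upper half-plane, I_k into the closed unit disc and I_l outside
   the circle of radius R = 1 + 2\<mu> + 2 sqrt (\<mu>^2 + \<mu>); the metric |d log f| / log R supported on
   the half-annulus in between is admissible for the paths from I_k to I_l and has area
   pi / log R. This is at most 2 when \<mu> \<ge> 1, and the same argument applied to the rotated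
   quadrilateral, whose cross-ratio is 1/\<mu>, bounds the width between I_m and I_n by 2 when
   \<mu> \<le> 1. Hence the pairs {m, n} with width > 2 form a non-crossing family of intervals
   [m, n] \<subseteq> [0, p - 1] of length at least 2, and such a family has at most p - 2 members. *)

section \<open>Area of the image of an injective holomorphic map\<close>

(* The change of variables theorem of HOL-Analysis is stated for real^'n, so complex
   maps are transported to real^2 along the isometry below. *)
definition vec_of_complex :: "complex \<Rightarrow> real^2" where
  "vec_of_complex z = (\<chi> i. if i = 1 then Re z else Im z)"

definition complex_of_vec :: "real^2 \<Rightarrow> complex" where
  "complex_of_vec v = Complex (v$1) (v$2)"

lemma vec_of_complex_nth [simp]: "vec_of_complex z $ 1 = Re z" "vec_of_complex z $ 2 = Im z"
  by (simp_all add: vec_of_complex_def)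

lemma complex_of_vec_inverse [simp]: "complex_of_vec (vec_of_complex z) = z"
  by (simp add: complex_of_vec_def complex_eq_iff)

lemma vec_of_complex_inverse [simp]: "vec_of_complex (complex_of_vec v) = v"
  by (simp add: complex_of_vec_def vec_of_complex_def vec_eq_iff forall_2)

lemma bounded_linear_vec_of_complex: "bounded_linear vec_of_complex"
  by (auto simp: linear_iff vec_of_complex_def vec_eq_iff linear_conv_bounded_linear[symmetric])

lemma bounded_linear_complex_of_vec: "bounded_linear complex_of_vec"
  by (auto simp: linear_iff complex_of_vec_def complex_eq_iff linear_conv_bounded_linear[symmetric])

lemma prod_Basis_vec2: "(\<Prod>b\<in>(Basis::(real^2) set). f b) = f (axis 1 1) * f (axis 2 1)"
proof -
  have B: "(Basis::(real^2) set) = {axis 1 1, axis 2 1}"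
    by (auto simp: Basis_vec_def UNIV_2)
  have "axis (1::2) (1::real) \<noteq> axis 2 1"
    by (simp add: axis_eq_axis)
  then show ?thesis unfolding B by simp
qed

lemma distr_lborel_complex_of_vec: "distr lborel borel complex_of_vec = (lborel :: complex measure)"
proof (rule lborel_eqI[symmetric])
  fix l u :: complex
  assume "\<And>b. b \<in> Basis \<Longrightarrow> l \<bullet> b \<le> u \<bullet> b"
  from this[of 1] this[of \<i>] have lu: "Re l \<le> Re u" "Im l \<le> Im u"
    by (simp_all add: Basis_complex_def)
  have "complex_of_vec -` box l u = box (vec_of_complex l) (vec_of_complex u)"
    by (auto simp: box_def Basis_vec_def Basis_complex_def complex_of_vec_def forall_2
        cart_eq_inner_axis[symmetric])
  then have "emeasure (distr lborel borel complex_of_vec) (box l u)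
      = emeasure lborel (box (vec_of_complex l) (vec_of_complex u))"
    using bounded_linear_complex_of_vec
    by (simp add: emeasure_distr borel_measurable_continuous_onI linear_continuous_on)
  also have "\<dots> = (\<Prod>b\<in>Basis. (vec_of_complex u - vec_of_complex l) \<bullet> b)"
    by (rule emeasure_lborel_box) (use lu in \<open>auto simp: Basis_vec_def inner_axis vec_of_complex_def\<close>)
  also have "\<dots> = (\<Prod>b\<in>Basis. (u - l) \<bullet> b)"
    by (simp add: prod_Basis_vec2 inner_axis Basis_complex_def)
  finally show "emeasure (distr lborel borel complex_of_vec) (box l u) = (\<Prod>b\<in>Basis. (u - l) \<bullet> b)" .
qed simp

lemma det_matrix_complex_mult:
  "det (matrix (\<lambda>h. vec_of_complex (w * complex_of_vec h))) = (cmod w)\<^sup>2"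
  using cmod_power2[of w]
  by (simp add: det_2 matrix_def vec_of_complex_def complex_of_vec_def axis_def power2_eq_square)

lemma complex_of_vec_borel [measurable]: "complex_of_vec \<in> borel_measurable borel"
  using bounded_linear_complex_of_vec by (intro borel_measurable_continuous_onI linear_continuous_on)

lemma nn_integral_lborel_complex_of_vec:
  assumes "f \<in> borel_measurable borel"
  shows "(\<integral>\<^sup>+z. f z \<partial>lborel) = (\<integral>\<^sup>+x. f (complex_of_vec x) \<partial>lborel)"
  using assms by (subst distr_lborel_complex_of_vec[symmetric]) (simp add: nn_integral_distr)

lemma emeasure_lborel_complex_of_vec:
  assumes "B \<in> sets borel"
  shows "emeasure lborel (complex_of_vec -` B) = emeasure lborel B"
proof -
  have "emeasure lborel B = emeasure (distr lborel borel complex_of_vec) B"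
    by (simp add: distr_lborel_complex_of_vec)
  also have "\<dots> = emeasure lborel (complex_of_vec -` B)"
    using assms by (simp add: emeasure_distr)
  finally show ?thesis ..
qed

lemma has_derivative_vec_of_complex_comp:
  assumes "(\<Phi> has_field_derivative \<Phi>') (at (complex_of_vec x))"
  shows "((vec_of_complex \<circ> \<Phi> \<circ> complex_of_vec) has_derivative
           (\<lambda>h. vec_of_complex (\<Phi>' * complex_of_vec h))) (at x)"
proof -
  from diff_chain_at[OF bounded_linear_imp_has_derivative[OF bounded_linear_complex_of_vec]
      has_field_derivative_imp_has_derivative[OF assms]]
  have "((\<Phi> \<circ> complex_of_vec) has_derivative (\<lambda>h. \<Phi>' * complex_of_vec h)) (at x)"
    by (simp add: o_def)
  from diff_chain_at[OF this bounded_linear_imp_has_derivative[OF bounded_linear_vec_of_complex]]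
  show ?thesis
    by (simp add: o_def)
qed

lemma nn_integral_cmod_deriv_square_le:
  fixes \<Phi> \<Phi>' :: "complex \<Rightarrow> complex"
  assumes U: "open U" and inj: "inj_on \<Phi> U"
    and der: "\<And>z. z \<in> U \<Longrightarrow> (\<Phi> has_field_derivative \<Phi>' z) (at z)"
    and cont: "continuous_on U \<Phi>'"
    and B: "\<Phi> ` U \<subseteq> B" "B \<in> sets borel"
  shows "(\<integral>\<^sup>+z. indicator U z * ennreal ((cmod (\<Phi>' z))\<^sup>2) \<partial>lborel) \<le> emeasure lborel B"
proof -
  define g where "g = vec_of_complex \<circ> \<Phi> \<circ> complex_of_vec"
  define S where "S = complex_of_vec -` U"
  have "open S"
    unfolding S_def using U bounded_linear_complex_of_vec
    by (intro continuous_open_vimage linear_continuous_at) auto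
  then have S: "S \<in> sets lebesgue"
    by simp
  have g_der: "(g has_derivative (\<lambda>h. vec_of_complex (\<Phi>' (complex_of_vec x) * complex_of_vec h))) (at x within S)"
    if "x \<in> S" for x
    unfolding g_def using der that by (auto simp: S_def intro: has_derivative_at_withinI has_derivative_vec_of_complex_comp)
  have g_inj: "inj_on g S"
  proof (rule inj_onI)
    fix x y assume "x \<in> S" "y \<in> S" "g x = g y"
    then have "\<Phi> (complex_of_vec x) = \<Phi> (complex_of_vec y)"
      unfolding g_def by (metis comp_apply complex_of_vec_inverse)
    then have "complex_of_vec x = complex_of_vec y"
      using inj \<open>x \<in> S\<close> \<open>y \<in> S\<close> by (simp add: S_def inj_on_eq_iff)
    then show "x = y"
      by (metis vec_of_complex_inverse)
  qed
  have g_image: "g ` S \<subseteq> complex_of_vec -` B"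
    using B(1) unfolding g_def S_def by auto
  have B': "complex_of_vec -` B \<in> sets lebesgue"
    using measurable_sets[OF complex_of_vec_borel B(2)] by simp
  have "(\<lambda>z. indicator U z * ennreal ((cmod (\<Phi>' z))\<^sup>2)) \<in> borel_measurable borel"
  proof -
    have "continuous_on U (\<lambda>z. (cmod (\<Phi>' z))\<^sup>2)"
      by (intro continuous_intros cont)
    from borel_measurable_continuous_on_indicator[OF _ this] U
    have "(\<lambda>z. ennreal (indicator U z * (cmod (\<Phi>' z))\<^sup>2)) \<in> borel_measurable borel"
      by simp
    then show ?thesis
      by (rule measurable_cong[THEN iffD1, rotated]) (auto simp: indicator_def)
  qed
  then have "(\<integral>\<^sup>+z. indicator U z * ennreal ((cmod (\<Phi>' z))\<^sup>2) \<partial>lborel)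
      = (\<integral>\<^sup>+x. ennreal ((cmod (\<Phi>' (complex_of_vec x)))\<^sup>2) * indicator S x \<partial>lborel)"
    by (subst nn_integral_lborel_complex_of_vec) (auto simp: S_def indicator_def intro!: nn_integral_cong)
  also have "\<dots> \<le> emeasure lborel B"
  proof (cases "emeasure lborel B = \<infinity>")
    case False
    have B_leb: "emeasure lebesgue (complex_of_vec -` B) = emeasure lborel B"
      using measurable_sets[OF complex_of_vec_borel B(2)] emeasure_lborel_complex_of_vec[OF B(2)]
      by (simp add: emeasure_completion main_part_sets)
    with False B' have "complex_of_vec -` B \<in> lmeasurable"
      by (simp add: fmeasurableI less_top)
    moreover have "g ` S \<in> sets lebesgue"
      using g_der S by (intro differentiable_image_in_sets_lebesgue) (auto simp: differentiable_on_def differentiable_def)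
    ultimately have "g ` S \<in> lmeasurable"
      by (rule fmeasurableI2[OF _ g_image])
    with has_measure_differentiable_image[OF S g_der g_inj]
    have "((\<lambda>x. \<bar>det (matrix (\<lambda>h. vec_of_complex (\<Phi>' (complex_of_vec x) * complex_of_vec h)))\<bar>)
        has_integral measure lebesgue (g ` S)) S"
      by blast
    then have "((\<lambda>x. (cmod (\<Phi>' (complex_of_vec x)))\<^sup>2) has_integral measure lebesgue (g ` S)) S"
      by (simp add: det_matrix_complex_mult)
    then have "(\<integral>\<^sup>+x. ennreal ((cmod (\<Phi>' (complex_of_vec x)))\<^sup>2) * indicator S x \<partial>lborel)
        = emeasure lebesgue (g ` S)"
      using \<open>g ` S \<in> lmeasurable\<close> by (simp add: nn_integral_has_integral_lebesgue' emeasure_eq_measure2)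
    also have "\<dots> \<le> emeasure lebesgue (complex_of_vec -` B)"
      using g_image B' by (intro emeasure_mono) auto
    finally show ?thesis
      using B_leb by simp
  qed simp
  finally show ?thesis .
qed

section \<open>An upper bound for the extremal width via a half-annulus\<close>

lemma crossing_subinterval:
  fixes f g :: "real \<Rightarrow> real"
  assumes cont: "continuous_on {a..b} f" "continuous_on {a..b} g"
    and ab: "a \<le> b" and start: "f a \<le> 0" and stop: "0 \<le> g b"
    and disjoint: "\<And>t. t \<in> {a..b} \<Longrightarrow> f t \<le> 0 \<Longrightarrow> g t < 0"
  obtains t0 t1 where "a \<le> t0" "t0 < t1" "t1 \<le> b" "f t0 = 0" "g t1 = 0"
    "\<And>t. t \<in> {t0<..<t1} \<Longrightarrow> 0 < f t \<and> g t < 0"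
proof -
  define K1 where "K1 = {t \<in> {a..b}. 0 \<le> g t}"
  define t1 where "t1 = Inf K1"
  have "closed K1"
    unfolding K1_def by (intro continuous_on_closed_Collect_le cont continuous_on_const) auto
  then have "t1 \<in> K1"
    unfolding t1_def using ab stop by (intro closed_contains_Inf) (auto simp: K1_def bdd_below_def)
  have t1_le: "t1 \<le> t" if "t \<in> K1" for t
    unfolding t1_def using that by (intro cInf_lower) (auto simp: K1_def bdd_below_def)
  define K0 where "K0 = {t \<in> {a..t1}. f t \<le> 0}"
  define t0 where "t0 = Sup K0"
  have "closed K0"
    unfolding K0_def using \<open>t1 \<in> K1\<close>
    by (intro continuous_on_closed_Collect_le continuous_on_subset[OF cont(1)] continuous_on_const)
      (auto simp: K1_def)
  then have "t0 \<in> K0"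
    unfolding t0_def using \<open>t1 \<in> K1\<close> start
    by (intro closed_contains_Sup) (auto simp: K0_def K1_def bdd_above_def)
  have le_t0: "t \<le> t0" if "t \<in> K0" for t
    unfolding t0_def using that by (intro cSup_upper) (auto simp: K0_def bdd_above_def)
  have "t0 \<noteq> t1"
    using \<open>t0 \<in> K0\<close> \<open>t1 \<in> K1\<close> disjoint by (fastforce simp: K0_def K1_def)
  then have "t0 < t1" "a \<le> t0" "t1 \<le> b"
    using \<open>t0 \<in> K0\<close> \<open>t1 \<in> K1\<close> by (auto simp: K0_def K1_def)
  have inside: "0 < f t \<and> g t < 0" if "t \<in> {t0<..<t1}" for t
    using that le_t0[of t] t1_le[of t] \<open>a \<le> t0\<close> \<open>t1 \<le> b\<close> by (force simp: K0_def K1_def)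
  have closure: "closure {t0<..<t1} = {t0..t1}"
    using \<open>t0 < t1\<close> by simp
  have cont': "continuous_on (closure {t0<..<t1}) f" "continuous_on (closure {t0<..<t1}) g"
    unfolding closure using \<open>a \<le> t0\<close> \<open>t1 \<le> b\<close> by (auto intro: continuous_on_subset[OF cont(1)] continuous_on_subset[OF cont(2)])
  have "0 \<le> f t0"
    by (rule continuous_ge_on_closure[OF cont'(1)]) (use closure \<open>t0 < t1\<close> inside in \<open>auto intro: less_imp_le\<close>)
  moreover have "g t1 \<le> 0"
    by (rule continuous_le_on_closure[OF cont'(2)]) (use closure \<open>t0 < t1\<close> inside in \<open>auto intro: less_imp_le\<close>)
  ultimately show ?thesis
    using that \<open>a \<le> t0\<close> \<open>t0 < t1\<close> \<open>t1 \<le> b\<close> \<open>t0 \<in> K0\<close> \<open>t1 \<in> K1\<close> inside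
    by (auto simp: K0_def K1_def)
qed

lemma has_integral_Re_comp_path:
  fixes \<Phi> \<Phi>' :: "complex \<Rightarrow> complex" and \<gamma> :: "real \<Rightarrow> complex" and u :: "real \<Rightarrow> real"
  assumes der: "\<And>z. z \<in> U \<Longrightarrow> (\<Phi> has_field_derivative \<Phi>' z) (at z)"
    and \<gamma>: "valid_path \<gamma>" and t: "0 \<le> t0" "t0 \<le> t1" "t1 \<le> 1"
    and in_U: "\<And>t. t \<in> {t0<..<t1} \<Longrightarrow> \<gamma> t \<in> U"
    and u: "continuous_on {t0..t1} u" "\<And>t. t \<in> {t0<..<t1} \<Longrightarrow> u t = Re (\<Phi> (\<gamma> t))"
  shows "((\<lambda>t. Re (\<Phi>' (\<gamma> t) * vector_derivative \<gamma> (at t))) has_integral (u t1 - u t0)) {t0..t1}"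
proof -
  obtain S where S: "finite S" and C1: "\<gamma> C1_differentiable_on {0..1} - S"
    using \<gamma> unfolding valid_path_def piecewise_C1_differentiable_on_def by blast
  have "(u has_vector_derivative Re (\<Phi>' (\<gamma> t) * vector_derivative \<gamma> (at t))) (at t)"
    if t': "t \<in> {t0<..<t1} - S" for t
  proof -
    have "(\<gamma> has_vector_derivative vector_derivative \<gamma> (at t)) (at t)"
      using C1 t' t by (auto simp: C1_differentiable_on_eq vector_derivative_works)
    from field_vector_diff_chain_at[OF this der[OF in_U]]
    have "((\<lambda>s. \<Phi> (\<gamma> s)) has_vector_derivative vector_derivative \<gamma> (at t) * \<Phi>' (\<gamma> t)) (at t)"
      using t' by (simp add: o_def)
    then have "((\<lambda>s. Re (\<Phi> (\<gamma> s))) has_real_derivative Re (vector_derivative \<gamma> (at t) * \<Phi>' (\<gamma> t))) (at t)"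
      by (rule has_field_derivative_Re)
    then have "((\<lambda>s. Re (\<Phi> (\<gamma> s))) has_vector_derivative Re (\<Phi>' (\<gamma> t) * vector_derivative \<gamma> (at t))) (at t)"
      by (simp add: has_real_derivative_iff_has_vector_derivative mult.commute)
    then show ?thesis
      by (rule has_vector_derivative_transform_within_open[where S="{t0<..<t1}"]) (use t' u(2) in auto)
  qed
  then show ?thesis
    by (rule fundamental_theorem_of_calculus_interior_strong[OF S t(2) _ u(1)])
qed

lemma rho_length_ge_Re_increment:
  fixes \<Phi> \<Phi>' :: "complex \<Rightarrow> complex" and \<rho> :: "complex \<Rightarrow> real" and \<gamma> :: "real \<Rightarrow> complex"
    and u :: "real \<Rightarrow> real"
  assumes der: "\<And>z. z \<in> U \<Longrightarrow> (\<Phi> has_field_derivative \<Phi>' z) (at z)"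
    and cont: "continuous_on U \<Phi>'"
    and \<rho>: "\<And>z. z \<in> U \<Longrightarrow> \<rho> z = cmod (\<Phi>' z)"
    and \<gamma>: "valid_path \<gamma>" and t: "0 \<le> t0" "t0 \<le> t1" "t1 \<le> 1"
    and in_U: "\<And>t. t \<in> {t0<..<t1} \<Longrightarrow> \<gamma> t \<in> U"
    and u: "continuous_on {t0..t1} u" "\<And>t. t \<in> {t0<..<t1} \<Longrightarrow> u t = Re (\<Phi> (\<gamma> t))"
  shows "ennreal (u t1 - u t0) \<le> rho_length \<rho> \<gamma>"
proof -
  obtain S where S: "finite S" and C1: "\<gamma> C1_differentiable_on {0..1} - S"
    using \<gamma> unfolding valid_path_def piecewise_C1_differentiable_on_def by blast
  define V where "V = {t0<..<t1} - S"
  define G where "G t = indicator V t * (\<rho> (\<gamma> t) * cmod (vector_derivative \<gamma> (at t)))" for t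
  have V: "open V" "V \<subseteq> {0..1} - S" "V \<subseteq> {t0<..<t1}"
    using S t by (auto simp: V_def intro: finite_imp_closed)
  have G_nonneg: "0 \<le> G t" for t
    using in_U by (auto simp: G_def V_def \<rho> indicator_def)
  have G_borel: "G \<in> borel_measurable borel"
  proof -
    have "continuous_on {0..1} \<gamma>"
      using \<gamma> valid_path_imp_path path_def by blast
    then have "continuous_on V \<gamma>"
      using V(2) by (auto intro: continuous_on_subset)
    moreover have "continuous_on V (\<lambda>t. vector_derivative \<gamma> (at t))"
      using C1 V(2) by (auto simp: C1_differentiable_on_eq intro: continuous_on_subset)
    ultimately have "continuous_on V (\<lambda>t. cmod (\<Phi>' (\<gamma> t)) * cmod (vector_derivative \<gamma> (at t)))"
      using in_U V(3)
      by (intro continuous_intros continuous_on_compose2[OF cont]) auto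
    then have "continuous_on V (\<lambda>t. \<rho> (\<gamma> t) * cmod (vector_derivative \<gamma> (at t)))"
      by (rule continuous_on_cong[THEN iffD1, rotated 2]) (use in_U V(3) \<rho> in auto)
    from borel_measurable_continuous_on_indicator[OF _ this] V(1)
    show ?thesis unfolding G_def by simp
  qed
  have G_le: "(\<integral>\<^sup>+t. ennreal (G t) \<partial>lborel) \<le> rho_length \<rho> \<gamma>"
    unfolding rho_length_def using V(2)
    by (intro nn_integral_mono) (auto simp: G_def indicator_def)
  have "((\<lambda>t. Re (\<Phi>' (\<gamma> t) * vector_derivative \<gamma> (at t))) has_integral (u t1 - u t0)) {t0..t1}"
    by (rule has_integral_Re_comp_path[where U=U]) (use der \<gamma> t in_U u in auto)
  then have "((\<lambda>t. Re (\<Phi>' (\<gamma> t) * vector_derivative \<gamma> (at t))) has_integral (u t1 - u t0)) {t0<..<t1}"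
    by (metis box_real has_integral_open_interval)
  \<comment> \<open>On the finite set \<open>S\<close> the vector derivative is a junk value while \<open>G\<close> vanishes.\<close>
  then have FTC: "((\<lambda>t. if t \<in> S then 0 else Re (\<Phi>' (\<gamma> t) * vector_derivative \<gamma> (at t)))
      has_integral (u t1 - u t0)) {t0<..<t1}"
    by (rule has_integral_spike_finite[OF S, rotated]) auto
  have integrand_le: "(if t \<in> S then 0 else Re (\<Phi>' (\<gamma> t) * vector_derivative \<gamma> (at t))) \<le> G t"
    if "t \<in> {t0<..<t1}" for t
  proof (cases "t \<in> S")
    case False
    then have "t \<in> V" using that by (simp add: V_def)
    have "Re (\<Phi>' (\<gamma> t) * vector_derivative \<gamma> (at t)) \<le> cmod (\<Phi>' (\<gamma> t) * vector_derivative \<gamma> (at t))"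
      by (rule complex_Re_le_cmod)
    also have "\<dots> = G t"
      using \<open>t \<in> V\<close> V(3) in_U by (auto simp: G_def \<rho> norm_mult)
    finally show ?thesis using False by simp
  qed (use G_nonneg in simp)
  show ?thesis
  proof (cases "\<integral>\<^sup>+t. ennreal (G t) \<partial>lborel" rule: ennreal_cases)
    case (real I)
    have "(G has_integral I) UNIV"
      by (rule nn_integral_has_integral[OF G_borel G_nonneg real(2) real(1)])
    moreover have "(\<lambda>t. if t \<in> {t0<..<t1} then G t else 0) = G"
      using V(3) by (force simp: G_def indicator_def)
    ultimately have "(G has_integral I) {t0<..<t1}"
      using has_integral_restrict_UNIV[of "{t0<..<t1}" G I] by simp
    then have "u t1 - u t0 \<le> I"
      using integrand_le by (intro has_integral_le[OF FTC]) blast+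
    then show ?thesis
      using G_le real by (metis ennreal_leI order_trans)
  qed (use G_le in \<open>simp add: top_unique\<close>)
qed

lemma has_field_derivative_Ln_mobius:
  fixes n1 n0 d1 d0 z :: complex
  assumes D: "d1*z+d0 \<noteq> 0" and N: "n1*z+n0 \<noteq> 0" and not_neg: "(n1*z+n0)/(d1*z+d0) \<notin> \<real>\<^sub>\<le>\<^sub>0"
  shows "((\<lambda>z. Ln ((n1*z+n0)/(d1*z+d0))) has_field_derivative
           (n1*d0 - n0*d1)/((n1*z+n0)*(d1*z+d0))) (at z)"
proof -
  have "((\<lambda>z. (n1*z+n0)/(d1*z+d0)) has_field_derivative
       (n1*(d1*z+d0) - (n1*z+n0)*d1)/((d1*z+d0)*(d1*z+d0))) (at z)"
    using D by (auto intro!: derivative_eq_intros simp: power2_eq_square)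
  from DERIV_chain2[OF has_field_derivative_Ln[OF not_neg] this]
  have "((\<lambda>z. Ln ((n1*z+n0)/(d1*z+d0))) has_field_derivative
      inverse ((n1*z+n0)/(d1*z+d0)) * ((n1*(d1*z+d0) - (n1*z+n0)*d1)/((d1*z+d0)*(d1*z+d0)))) (at z)"
    by simp
  moreover have "n1*(d1*z+d0) - (n1*z+n0)*d1 = n1*d0 - n0*d1"
    by (simp add: algebra_simps)
  moreover have "inverse (a/b) * (c/(b*b)) = c/(a*b)" if "a \<noteq> 0" "b \<noteq> 0" for a b c :: complex
    using that by (simp add: field_simps)
  ultimately show ?thesis
    using D N by simp
qed

lemma mobius_num_den_not_both_zero:
  fixes n1 n0 d1 d0 z :: complex
  assumes "n1*d0 - n0*d1 \<noteq> 0"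
  shows "\<not> (n1*z+n0 = 0 \<and> d1*z+d0 = 0)"
proof
  assume "n1*z+n0 = 0 \<and> d1*z+d0 = 0"
  then have "n0 = - n1*z" "d0 = - d1*z"
    by (auto simp: algebra_simps eq_neg_iff_add_eq_0)
  then show False
    using assms by (simp add: algebra_simps)
qed

lemma inj_on_Ln_mobius:
  fixes n1 n0 d1 d0 :: complex
  assumes "n1*d0 - n0*d1 \<noteq> 0"
  shows "inj_on (\<lambda>z. Ln ((n1*z+n0)/(d1*z+d0))) {z. n1*z+n0 \<noteq> 0 \<and> d1*z+d0 \<noteq> 0}"
proof (rule inj_onI)
  fix z w
  assume z: "z \<in> {z. n1*z+n0 \<noteq> 0 \<and> d1*z+d0 \<noteq> 0}" and w: "w \<in> {z. n1*z+n0 \<noteq> 0 \<and> d1*z+d0 \<noteq> 0}"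
    and "Ln ((n1*z+n0)/(d1*z+d0)) = Ln ((n1*w+n0)/(d1*w+d0))"
  then have "exp (Ln ((n1*z+n0)/(d1*z+d0))) = exp (Ln ((n1*w+n0)/(d1*w+d0)))"
    by simp
  then have "(n1*z+n0)/(d1*z+d0) = (n1*w+n0)/(d1*w+d0)"
    using z w by simp
  then have "(n1*d0 - n0*d1) * (z - w) = 0"
    using z w by (simp add: frac_eq_eq algebra_simps)
  then show "z = w"
    using assms by simp
qed

lemma rho_length_ge_1_across_half_annulus:
  fixes n1 n0 d1 d0 :: complex and r r' :: real and \<gamma> :: "real \<Rightarrow> complex"
  defines "U \<equiv> {z. cmod z < 1 \<and> r * cmod (d1*z+d0) < cmod (n1*z+n0) \<and> cmod (n1*z+n0) < r' * cmod (d1*z+d0)}"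
  assumes det: "n1*d0 - n0*d1 \<noteq> 0" and r: "0 < r" "r < r'"
    and der: "\<And>z. z \<in> U \<Longrightarrow> (\<Phi> has_field_derivative \<Phi>' z) (at z)"
    and cont: "continuous_on U \<Phi>'"
    and Re_\<Phi>: "\<And>z. z \<in> U \<Longrightarrow> Re (\<Phi> z) = (ln (cmod (n1*z+n0)) - ln (cmod (d1*z+d0))) / ln (r'/r)"
    and \<rho>: "\<And>z. z \<in> U \<Longrightarrow> \<rho> z = cmod (\<Phi>' z)"
    and \<gamma>: "valid_path \<gamma>" "\<gamma> ` {0<..<1} \<subseteq> ball 0 1"
    and start: "cmod (n1 * \<gamma> 0 + n0) \<le> r * cmod (d1 * \<gamma> 0 + d0)"
    and stop: "r' * cmod (d1 * \<gamma> 1 + d0) \<le> cmod (n1 * \<gamma> 1 + n0)"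
  shows "1 \<le> rho_length \<rho> \<gamma>"
proof -
  define N where "N t = n1 * \<gamma> t + n0" for t
  define D where "D t = d1 * \<gamma> t + d0" for t
  have cont_N: "continuous_on {0..1} N" and cont_D: "continuous_on {0..1} D"
    using valid_path_imp_path[OF \<gamma>(1)] unfolding path_def N_def D_def by (auto intro!: continuous_intros)
  have not_both_zero: "\<not> (N t = 0 \<and> D t = 0)" for t
    using mobius_num_den_not_both_zero[OF det] by (simp add: N_def D_def)
  obtain t0 t1 where t: "0 \<le> t0" "t0 < t1" "t1 \<le> 1"
    and ends: "cmod (N t0) = r * cmod (D t0)" "cmod (N t1) = r' * cmod (D t1)"
    and between: "\<And>t. t \<in> {t0<..<t1} \<Longrightarrow> r * cmod (D t) < cmod (N t) \<and> cmod (N t) < r' * cmod (D t)"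
  proof (rule crossing_subinterval[of 0 1 "\<lambda>t. cmod (N t) - r * cmod (D t)" "\<lambda>t. cmod (N t) - r' * cmod (D t)"])
    show "cmod (N t) - r' * cmod (D t) < 0" if "cmod (N t) - r * cmod (D t) \<le> 0" for t
    proof (rule ccontr)
      assume "\<not> ?thesis"
      with that have "(r' - r) * cmod (D t) \<le> 0"
        by (simp add: algebra_simps)
      then have "D t = 0"
        using r by (simp add: mult_le_0_iff)
      with that not_both_zero show False
        by simp
    qed
  qed (use cont_N cont_D start stop in \<open>auto intro!: continuous_intros simp: N_def D_def\<close>)
  have nonzero: "N t \<noteq> 0 \<and> D t \<noteq> 0" if "t \<in> {t0..t1}" for t
  proof (cases "t \<in> {t0<..<t1}")
    case True
    have "0 \<le> r * cmod (D t)"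
      using r by simp
    then have "0 < cmod (N t)" "0 < r' * cmod (D t)"
      using between[OF True] by linarith+
    then show ?thesis
      using r by (simp add: zero_less_mult_iff)
  qed (use that ends not_both_zero r in auto)
  have \<gamma>_in_U: "\<gamma> t \<in> U" if "t \<in> {t0<..<t1}" for t
  proof -
    have "t \<in> {0<..<1}"
      using that t by auto
    then have "\<gamma> t \<in> ball 0 1"
      using \<gamma>(2) by blast
    then show ?thesis
      using between[OF that] by (simp add: U_def N_def D_def)
  qed
  define u where "u t = (ln (cmod (N t)) - ln (cmod (D t))) / ln (r'/r)" for t
  have "ennreal (u t1 - u t0) \<le> rho_length \<rho> \<gamma>"
  proof (rule rho_length_ge_Re_increment[OF der cont \<rho> \<gamma>(1) t(1) less_imp_le[OF t(2)] t(3) \<gamma>_in_U])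
    show "u t = Re (\<Phi> (\<gamma> t))" if "t \<in> {t0<..<t1}" for t
      using Re_\<Phi>[OF \<gamma>_in_U[OF that]] by (simp add: u_def N_def D_def)
    show "continuous_on {t0..t1} u"
      unfolding u_def using t nonzero r
      by (intro continuous_intros continuous_on_subset[OF cont_N] continuous_on_subset[OF cont_D]) auto
  qed
  moreover have "u t1 - u t0 = 1"
    using ends nonzero t r by (simp add: u_def ln_mult ln_div diff_divide_distrib[symmetric])
  ultimately show ?thesis
    by simp
qed

(* Test metric |\<Phi>'| with \<Phi> = Ln (N/D) / ln (r'/r): every path of the family crosses the region
   r < |N/D| < r' of the disc, along which Re \<Phi> increases by 1, and \<Phi> maps that region
   injectively into a box of area pi / ln (r'/r). *)
lemma extremal_width_le_half_annulus:
  fixes n1 n0 d1 d0 :: complex and r r' :: real and X Y :: "complex set"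
  assumes det: "n1*d0 - n0*d1 \<noteq> 0"
    and half_plane: "\<And>z. cmod z < 1 \<Longrightarrow> d1*z+d0 \<noteq> 0 \<and> 0 < Im ((n1*z+n0)/(d1*z+d0))"
    and r: "0 < r" "r < r'"
    and X: "\<And>z. z \<in> X \<Longrightarrow> cmod (n1*z+n0) \<le> r * cmod (d1*z+d0)"
    and Y: "\<And>z. z \<in> Y \<Longrightarrow> r' * cmod (d1*z+d0) \<le> cmod (n1*z+n0)"
  shows "extremal_width (joining_paths X Y) \<le> ennreal (pi / ln (r'/r))"
proof -
  define N where "N z = n1*z+n0" for z
  define D where "D z = d1*z+d0" for z
  define L where "L = ln (r'/r)"
  define U where "U = {z. cmod z < 1 \<and> r * cmod (D z) < cmod (N z) \<and> cmod (N z) < r' * cmod (D z)}"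
  define \<Phi> where "\<Phi> z = Ln (N z / D z) / L" for z
  define \<Phi>' where "\<Phi>' z = (n1*d0 - n0*d1) / (N z * D z * L)" for z
  define \<rho> where "\<rho> z = indicator U z * cmod (\<Phi>' z)" for z
  have L: "0 < L"
    using r by (simp add: L_def)
  have U: "open U"
    unfolding U_def N_def D_def by (intro open_Collect_conj open_Collect_less continuous_intros)
  have in_U: "D z \<noteq> 0" "N z \<noteq> 0" "0 < Im (N z / D z)" if "z \<in> U" for z
    using half_plane[of z] that by (auto simp: U_def N_def D_def)
  have der: "(\<Phi> has_field_derivative \<Phi>' z) (at z)" if "z \<in> U" for z
  proof -
    have "((\<lambda>z. Ln (N z / D z)) has_field_derivative (n1*d0 - n0*d1) / (N z * D z)) (at z)"
      unfolding N_def D_def using in_U[OF that]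
      by (intro has_field_derivative_Ln_mobius) (auto simp: N_def D_def nonpos_Reals_def complex_is_Real_iff)
    then show ?thesis
      unfolding \<Phi>_def \<Phi>'_def using DERIV_cdivide by fastforce
  qed
  have cont: "continuous_on U \<Phi>'"
    unfolding \<Phi>'_def N_def D_def by (intro continuous_intros) (use in_U L in \<open>auto simp: N_def D_def\<close>)
  have "U \<subseteq> {z. n1*z+n0 \<noteq> 0 \<and> d1*z+d0 \<noteq> 0}"
    using in_U(1,2) by (auto simp: N_def D_def)
  then have "inj_on (\<lambda>z. Ln ((n1*z+n0)/(d1*z+d0))) U"
    by (rule inj_on_subset[OF inj_on_Ln_mobius[OF det]])
  then have inj: "inj_on \<Phi> U"
    using L unfolding \<Phi>_def N_def D_def inj_on_def by auto
  have image: "\<Phi> ` U \<subseteq> box (Complex (ln r / L) 0) (Complex (ln r' / L) (pi / L))"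
  proof safe
    fix z assume "z \<in> U"
    then have "r < cmod (N z / D z)" "cmod (N z / D z) < r'"
      using in_U[OF \<open>z \<in> U\<close>] by (auto simp: U_def norm_divide field_simps)
    then have "ln r < Re (Ln (N z / D z))" "Re (Ln (N z / D z)) < ln r'"
      using in_U[OF \<open>z \<in> U\<close>] r by auto
    moreover have "0 < Im (Ln (N z / D z))" "Im (Ln (N z / D z)) < pi"
      using Im_Ln_pos_lt_imp[OF in_U(3)[OF \<open>z \<in> U\<close>]] by auto
    ultimately show "\<Phi> z \<in> box (Complex (ln r / L) 0) (Complex (ln r' / L) (pi / L))"
      using L by (auto simp: \<Phi>_def box_def Basis_complex_def divide_strict_right_mono)
  qed
  have "admissible_metric (joining_paths X Y) \<rho>"
    unfolding admissible_metric_def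
  proof (intro conjI ballI allI)
    from borel_measurable_continuous_on_indicator[OF _ continuous_on_norm[OF cont]] U
    show "\<rho> \<in> borel_measurable borel"
      unfolding \<rho>_def by simp
    show "0 \<le> \<rho> z" for z
      by (simp add: \<rho>_def)
    show "1 \<le> rho_length \<rho> \<gamma>" if "\<gamma> \<in> joining_paths X Y" for \<gamma>
      using that X Y r det der cont in_U
      by (intro rho_length_ge_1_across_half_annulus[of n1 d0 n0 d1 r r' \<Phi> \<Phi>'])
        (auto simp: joining_paths_def U_def N_def D_def \<rho>_def \<Phi>_def L_def norm_divide ln_div)
  qed
  then have "extremal_width (joining_paths X Y) \<le> (\<integral>\<^sup>+z. ennreal ((\<rho> z)\<^sup>2) \<partial>lborel)"
    unfolding extremal_width_def by (auto intro: INF_lower)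
  also have "\<dots> = (\<integral>\<^sup>+z. indicator U z * ennreal ((cmod (\<Phi>' z))\<^sup>2) \<partial>lborel)"
    by (intro nn_integral_cong) (simp add: \<rho>_def indicator_def)
  also have "\<dots> \<le> emeasure lborel (box (Complex (ln r / L) 0) (Complex (ln r' / L) (pi / L)))"
    by (rule nn_integral_cmod_deriv_square_le[OF U inj der cont image borel_open[OF open_box]])
  also have "\<dots> = ennreal ((ln r' / L - ln r / L) * (pi / L))"
    using r L by (subst emeasure_lborel_box) (auto simp: Basis_complex_def divide_right_mono)
  also have "ln r' / L - ln r / L = 1"
    using r L by (simp add: L_def ln_div diff_divide_distrib[symmetric])
  finally show ?thesis
    by (simp add: L_def)
qed

section \<open>A Moebius map separating two opposite arcs\<close>

lemma cot_diff:
  fixes a b :: real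
  assumes "sin a \<noteq> 0" "sin b \<noteq> 0"
  shows "cot a - cot b = sin (b - a) / (sin a * sin b)"
  using assms by (simp add: cot_def field_simps sin_diff)

lemma cot_add_pi: "cot (x + pi) = cot (x :: real)"
  by (simp add: cot_def)

lemma cot_antimono:
  fixes a b :: real
  assumes "0 < sin a * sin b" "a \<le> b" "b \<le> a + pi"
  shows "cot b \<le> cot a"
proof -
  have "0 \<le> sin (b - a)"
    using assms by (intro sin_ge_zero) auto
  then have "0 \<le> cot a - cot b"
    using assms(1) by (subst cot_diff) (auto simp: mult_eq_0_iff)
  then show ?thesis by simp
qed

lemma cot_strict_antimono:
  fixes a b :: real
  assumes "0 < sin a * sin b" "a < b" "b < a + pi"
  shows "cot b < cot a"
proof -
  have "0 < sin (b - a)"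
    using assms by (intro sin_gt_zero) auto
  then have "0 < cot a - cot b"
    using assms(1) by (subst cot_diff) (auto simp: mult_eq_0_iff)
  then show ?thesis by simp
qed

lemma cot_half_angle_mono:
  fixes \<phi> s s' :: real
  assumes "\<phi> - 2*pi < s" "s \<le> s'" "s' < \<phi>"
  shows "cot ((\<phi> - s)/2) \<le> cot ((\<phi> - s')/2)"
  using assms
  by (intro cot_antimono mult_pos_pos sin_gt_zero) (auto simp: field_simps)

lemma cot_half_angle_strict_mono:
  fixes \<phi> s s' :: real
  assumes "\<phi> - 2*pi < s" "s < s'" "s' < \<phi>"
  shows "cot ((\<phi> - s)/2) < cot ((\<phi> - s')/2)"
  using assms
  by (intro cot_strict_antimono mult_pos_pos sin_gt_zero) (auto simp: field_simps)


lemma cot_half_angle_le_wrap: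
  fixes \<phi> s t :: real
  assumes "\<phi> < s" "s \<le> t + 2*pi" "t < \<phi>"
  shows "sin ((\<phi> - s)/2) \<noteq> 0" "cot ((\<phi> - s)/2) \<le> cot ((\<phi> - t)/2)"
proof -
  have "0 < sin ((s - \<phi>)/2)"
    using assms by (intro sin_gt_zero) auto
  moreover have "sin ((\<phi> - s)/2) = - sin ((s - \<phi>)/2)"
    by (metis minus_diff_eq minus_divide_left sin_minus)
  ultimately show "sin ((\<phi> - s)/2) \<noteq> 0"
    by simp
  have "cot ((\<phi> - s)/2) = cot ((\<phi> - (s - 2*pi))/2)"
    using cot_add_pi[of "(\<phi> - s)/2"] by (simp add: field_simps)
  also have "\<dots> \<le> cot ((\<phi> - t)/2)"
    using assms by (intro cot_half_angle_mono) auto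
  finally show "cot ((\<phi> - s)/2) \<le> cot ((\<phi> - t)/2)" .
qed

lemma cot_mult_cayley:
  fixes k :: real
  assumes "sin k \<noteq> 0"
  shows "complex_of_real (cot k) * (1 - cis (-2*k)) = \<i> * (1 + cis (-2*k))"
proof -
  have cis: "cis (-2*k) = Complex (cos k * cos k - sin k * sin k) (- 2 * sin k * cos k)"
    by (simp add: cis.code cos_double sin_double power2_eq_square)
  have "cos k * (cos k * cos k) + cos k * (sin k * sin k) = cos k"
    using sin_cos_squared_add[of k] by (simp add: power2_eq_square flip: distrib_left)
  then show ?thesis
    unfolding cis using assms by (simp add: cot_def complex_eq_iff field_simps)
qed

lemma Im_cayley_pos:
  fixes a :: complex
  assumes "cmod a < 1"
  shows "0 < Im (\<i> * (1 + a) / (1 - a))"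
proof -
  have "Im (\<i> * (1 + a)) * Re (1 - a) - Re (\<i> * (1 + a)) * Im (1 - a) = 1 - (Re a)\<^sup>2 - (Im a)\<^sup>2"
    by (simp add: algebra_simps power2_eq_square)
  then have "Im (\<i> * (1 + a) / (1 - a)) = (1 - (Re a)\<^sup>2 - (Im a)\<^sup>2) / (cmod (1 - a))\<^sup>2"
    by (simp only: Im_divide cmod_power2)
  moreover have "(Re a)\<^sup>2 + (Im a)\<^sup>2 < 1"
    using assms by (simp add: cmod_def)
  moreover have "1 - a \<noteq> 0"
    using assms by auto
  ultimately show ?thesis
    by (simp add: divide_pos_pos)
qed

lemma Im_mobius_pos:
  fixes y :: complex and \<tau> :: real
  assumes "0 < Im y" "0 < \<tau>" "\<tau> < 1"
  shows "1 + \<tau> * y \<noteq> 0 \<and> 0 < Im ((y + \<tau>) / (1 + \<tau> * y))"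
proof
  have "0 < Im (1 + \<tau> * y)"
    using assms by simp
  then show nonzero: "1 + \<tau> * y \<noteq> 0"
    by (metis zero_complex.sel(2) less_irrefl)
  have "Im (y + \<tau>) * Re (1 + \<tau> * y) - Re (y + \<tau>) * Im (1 + \<tau> * y) = Im y * (1 - \<tau>\<^sup>2)"
    by (simp add: algebra_simps power2_eq_square)
  then have "Im ((y + \<tau>) / (1 + \<tau> * y)) = Im y * (1 - \<tau>\<^sup>2) / (cmod (1 + \<tau> * y))\<^sup>2"
    by (simp only: Im_divide cmod_power2)
  moreover have "\<tau>\<^sup>2 < 1"
    using assms by (simp add: abs_square_less_1)
  ultimately show "0 < Im ((y + \<tau>) / (1 + \<tau> * y))"
    using assms nonzero by simp
qed

lemma mobius_abs_le_on_interval: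
  fixes y \<tau> :: real
  assumes "\<bar>y\<bar> \<le> 1" "0 < \<tau>" "\<tau> < 1"
  shows "\<bar>y + \<tau>\<bar> \<le> \<bar>1 + \<tau> * y\<bar>"
proof -
  have "(1 + \<tau> * y)\<^sup>2 - (y + \<tau>)\<^sup>2 = (1 - \<tau>\<^sup>2) * (1 - y\<^sup>2)"
    by (simp add: power2_eq_square algebra_simps)
  moreover have "y\<^sup>2 \<le> 1" "\<tau>\<^sup>2 \<le> 1"
    using assms by (simp_all add: abs_square_le_1)
  then have "0 \<le> (1 - \<tau>\<^sup>2) * (1 - y\<^sup>2)"
    by (intro mult_nonneg_nonneg) auto
  ultimately show ?thesis
    by (simp add: abs_le_square_iff)
qed

lemma mobius_abs_ge_far_left:
  fixes y \<tau> :: real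
  assumes "y \<le> - (\<tau> + 1/\<tau>) / 2" "0 < \<tau>" "\<tau> < 1"
  shows "\<bar>1 + \<tau> * y\<bar> \<le> \<tau> * \<bar>y + \<tau>\<bar>"
proof -
  have "(\<tau> * (y + \<tau>))\<^sup>2 - (1 + \<tau> * y)\<^sup>2 = (1 - \<tau>\<^sup>2) * - (2 * \<tau> * y + \<tau>\<^sup>2 + 1)"
    by (simp add: power2_eq_square algebra_simps)
  moreover have "2 * \<tau> * y + \<tau>\<^sup>2 + 1 \<le> 0"
  proof -
    have "2 * \<tau> * y \<le> 2 * \<tau> * (- (\<tau> + 1/\<tau>) / 2)"
      using assms by (intro mult_left_mono) auto
    then show ?thesis
      using assms by (simp add: field_simps power2_eq_square)
  qed
  moreover have "0 \<le> 1 - \<tau>\<^sup>2"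
    using assms by (simp add: power2_eq_square mult_le_one)
  ultimately have "(1 + \<tau> * y)\<^sup>2 \<le> (\<tau> * (y + \<tau>))\<^sup>2"
    by (smt (verit) mult_nonneg_nonneg)
  then have "\<bar>1 + \<tau> * y\<bar> \<le> \<bar>\<tau> * (y + \<tau>)\<bar>"
    by (simp add: abs_le_square_iff)
  then show ?thesis
    using assms by (simp add: abs_mult)
qed

(* The map is z \<mapsto> S (\<alpha> w + \<beta>), where w = \<i> (1 + \<epsilon> z) / (1 - \<epsilon> z) with \<epsilon> = cis (- \<phi>)
   is a Cayley map onto the upper half-plane sending cis s to cot ((\<phi> - s)/2), and
   S y = (y + \<tau>) / (1 + \<tau> y) preserves the half-plane, maps [-1, 1] into the closed unit disc
   and maps (-\<infinity>, -(\<tau> + 1/\<tau>)/2] outside the circle of radius 1/\<tau>. *)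
lemma mobius_separating_arcs:
  fixes \<alpha> \<beta> \<tau> \<phi> :: real
  assumes \<alpha>: "0 < \<alpha>" and \<tau>: "0 < \<tau>" "\<tau> < 1"
  obtains n1 n0 d1 d0 :: complex where
    "n1*d0 - n0*d1 \<noteq> 0"
    "\<And>z. cmod z < 1 \<Longrightarrow> d1*z+d0 \<noteq> 0 \<and> 0 < Im ((n1*z+n0)/(d1*z+d0))"
    "\<And>s. sin ((\<phi> - s)/2) \<noteq> 0 \<Longrightarrow> \<bar>\<alpha> * cot ((\<phi> - s)/2) + \<beta>\<bar> \<le> 1 \<Longrightarrow>
       cmod (n1 * cis s + n0) \<le> cmod (d1 * cis s + d0)"
    "\<And>s. sin ((\<phi> - s)/2) \<noteq> 0 \<Longrightarrow> \<alpha> * cot ((\<phi> - s)/2) + \<beta> \<le> - (\<tau> + 1/\<tau>) / 2 \<Longrightarrow>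
       cmod (d1 * cis s + d0) \<le> \<tau> * cmod (n1 * cis s + n0)"
    "cmod (d1 * cis \<phi> + d0) \<le> \<tau> * cmod (n1 * cis \<phi> + n0)"
proof -
  define \<epsilon> where "\<epsilon> = cis (- \<phi>)"
  define n1 where "n1 = \<epsilon> * (\<i> * \<alpha> - (\<beta> + \<tau>))"
  define n0 where "n0 = \<i> * \<alpha> + (\<beta> + \<tau>)"
  define d1 where "d1 = \<epsilon> * (\<i> * (\<tau> * \<alpha>) - (1 + \<tau> * \<beta>))"
  define d0 where "d0 = (1 + \<tau> * \<beta>) + \<i> * (\<tau> * \<alpha>)"
  have factor: "n1*z+n0 = (1 - \<epsilon>*z) * (\<alpha> * w + \<beta> + \<tau>) \<and> d1*z+d0 = (1 - \<epsilon>*z) * (1 + \<tau> * (\<alpha> * w + \<beta>))"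
    if "w * (1 - \<epsilon>*z) = \<i> * (1 + \<epsilon>*z)" for z w :: complex
  proof
    have "n1*z+n0 = \<alpha> * (\<i> * (1 + \<epsilon>*z)) + (\<beta> + \<tau>) * (1 - \<epsilon>*z)"
      by (simp add: n1_def n0_def algebra_simps)
    then show "n1*z+n0 = (1 - \<epsilon>*z) * (\<alpha> * w + \<beta> + \<tau>)"
      unfolding that[symmetric] by (simp add: algebra_simps)
    have "d1*z+d0 = (\<tau> * \<alpha>) * (\<i> * (1 + \<epsilon>*z)) + (1 + \<tau> * \<beta>) * (1 - \<epsilon>*z)"
      by (simp add: d1_def d0_def algebra_simps)
    then show "d1*z+d0 = (1 - \<epsilon>*z) * (1 + \<tau> * (\<alpha> * w + \<beta>))"
      unfolding that[symmetric] by (simp add: algebra_simps)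
  qed
  have on_circle: "cmod (n1 * cis s + n0) = cmod (1 - \<epsilon> * cis s) * \<bar>y + \<tau>\<bar> \<and>
      cmod (d1 * cis s + d0) = cmod (1 - \<epsilon> * cis s) * \<bar>1 + \<tau> * y\<bar>"
    if "sin ((\<phi> - s)/2) \<noteq> 0" "y = \<alpha> * cot ((\<phi> - s)/2) + \<beta>" for s y
  proof -
    have rotate: "\<epsilon> * cis s = cis (s - \<phi>)" "-2 * ((\<phi> - s)/2) = s - \<phi>"
      by (simp_all add: \<epsilon>_def cis_mult)
    have "cot ((\<phi> - s)/2) * (1 - \<epsilon> * cis s) = \<i> * (1 + \<epsilon> * cis s)"
      using cot_mult_cayley[OF that(1)] unfolding rotate .
    moreover have "cmod (1 + complex_of_real x) = \<bar>1 + x\<bar>" for x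
      by (metis norm_of_real of_real_1 of_real_add)
    ultimately show ?thesis
      using factor unfolding that(2) by (simp add: norm_mult flip: of_real_add of_real_mult)
  qed
  show ?thesis
  proof (rule that)
    have "n1*d0 - n0*d1 = 2 * \<i> * \<alpha> * (1 - \<tau> * \<tau>) * \<epsilon>"
      by (simp add: n1_def n0_def d1_def d0_def algebra_simps)
    moreover have "\<tau> * \<tau> < 1"
      using \<tau> by (simp add: abs_square_less_1 flip: power2_eq_square)
    ultimately show "n1*d0 - n0*d1 \<noteq> 0"
      using \<alpha> by (auto simp: \<epsilon>_def simp flip: of_real_mult)
  next
    fix z :: complex assume "cmod z < 1"
    then have "cmod (\<epsilon> * z) < 1"
      by (simp add: \<epsilon>_def norm_mult)
    define w where "w = \<i> * (1 + \<epsilon> * z) / (1 - \<epsilon> * z)"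
    have "1 - \<epsilon> * z \<noteq> 0"
      using \<open>cmod (\<epsilon> * z) < 1\<close> by auto
    then have w: "w * (1 - \<epsilon> * z) = \<i> * (1 + \<epsilon> * z)"
      by (simp add: w_def)
    define y where "y = \<alpha> * w + \<beta>"
    from factor[OF w] have N: "n1*z+n0 = (1 - \<epsilon>*z) * (y + \<tau>)"
      and D: "d1*z+d0 = (1 - \<epsilon>*z) * (1 + \<tau> * y)"
      by (simp_all add: y_def add.assoc)
    have "0 < Im w"
      unfolding w_def by (rule Im_cayley_pos) fact
    then have "0 < Im y"
      using \<alpha> by (simp add: y_def)
    from Im_mobius_pos[OF this \<tau>] show "d1*z+d0 \<noteq> 0 \<and> 0 < Im ((n1*z+n0)/(d1*z+d0))"
      unfolding N D using \<open>1 - \<epsilon> * z \<noteq> 0\<close> by simp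
  next
    fix s assume s: "sin ((\<phi> - s)/2) \<noteq> 0" "\<bar>\<alpha> * cot ((\<phi> - s)/2) + \<beta>\<bar> \<le> 1"
    define y where "y = \<alpha> * cot ((\<phi> - s)/2) + \<beta>"
    have "\<bar>y + \<tau>\<bar> \<le> \<bar>1 + \<tau> * y\<bar>"
      using mobius_abs_le_on_interval[OF _ \<tau>] s(2) by (simp add: y_def)
    then show "cmod (n1 * cis s + n0) \<le> cmod (d1 * cis s + d0)"
      using on_circle[OF s(1) y_def] by (simp add: mult_left_mono)
  next
    fix s assume s: "sin ((\<phi> - s)/2) \<noteq> 0" "\<alpha> * cot ((\<phi> - s)/2) + \<beta> \<le> - (\<tau> + 1/\<tau>) / 2"
    define y where "y = \<alpha> * cot ((\<phi> - s)/2) + \<beta>"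
    have "\<bar>1 + \<tau> * y\<bar> \<le> \<tau> * \<bar>y + \<tau>\<bar>"
      using mobius_abs_ge_far_left[OF _ \<tau>] s(2) by (simp add: y_def)
    then have "cmod (1 - \<epsilon> * cis s) * \<bar>1 + \<tau> * y\<bar> \<le> \<tau> * (cmod (1 - \<epsilon> * cis s) * \<bar>y + \<tau>\<bar>)"
      by (subst mult.left_commute) (simp add: mult_left_mono)
    then show "cmod (d1 * cis s + d0) \<le> \<tau> * cmod (n1 * cis s + n0)"
      using on_circle[OF s(1) y_def] by simp
  next
    have "\<epsilon> * cis \<phi> = 1"
      by (simp add: \<epsilon>_def cis_mult)
    moreover have "n1 * cis \<phi> + n0 = (\<i> * \<alpha> - (\<beta> + \<tau>)) * (\<epsilon> * cis \<phi>) + n0"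
      "d1 * cis \<phi> + d0 = (\<i> * (\<tau> * \<alpha>) - (1 + \<tau> * \<beta>)) * (\<epsilon> * cis \<phi>) + d0"
      by (simp_all add: n1_def d1_def algebra_simps)
    ultimately have "n1 * cis \<phi> + n0 = 2 * \<i> * \<alpha>" "d1 * cis \<phi> + d0 = \<tau> * (2 * \<i> * \<alpha>)"
      by (simp_all add: n0_def d0_def algebra_simps)
    then show "cmod (d1 * cis \<phi> + d0) \<le> \<tau> * cmod (n1 * cis \<phi> + n0)"
      using \<tau> by (simp add: norm_mult)
  qed
qed

section \<open>Crossing pairs of arcs\<close>

(* Since |cis a - cis b| = 2 |sin ((b - a)/2)|, this is the cross-ratio of the four points
   cis t1, cis t2, cis t3, cis t4. *)
definition arc_cross_ratio :: "real \<Rightarrow> real \<Rightarrow> real \<Rightarrow> real \<Rightarrow> real" where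
  "arc_cross_ratio t1 t2 t3 t4 =
     sin ((t2-t1)/2) * sin ((t4-t3)/2) / (sin ((t3-t2)/2) * sin ((t4-t1)/2))"

lemma arc_cross_ratio_rotate:
  "arc_cross_ratio (t4 - 2*pi) t1 t2 t3 = 1 / arc_cross_ratio t1 t2 t3 t4"
proof -
  have "sin ((t1 - (t4 - 2*pi))/2) = sin ((t4-t1)/2)" "sin ((t3 - (t4 - 2*pi))/2) = sin ((t4-t3)/2)"
    using sin_pi_minus[of "(t4-t1)/2"] sin_pi_minus[of "(t4-t3)/2"] by (simp_all add: field_simps)
  then show ?thesis
    by (simp add: arc_cross_ratio_def)
qed

lemma half_annulus_radius:
  fixes \<mu> :: real
  assumes "0 < \<mu>"
  defines "R \<equiv> 1 + 2*\<mu> + 2 * sqrt (\<mu>\<^sup>2 + \<mu>)"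
  shows "1 < R" "(1/R + R) / 2 = 1 + 2*\<mu>"
proof -
  have q: "sqrt (\<mu>\<^sup>2 + \<mu>) * sqrt (\<mu>\<^sup>2 + \<mu>) = \<mu>\<^sup>2 + \<mu>"
    using assms by simp
  show "1 < R"
    using assms by (simp add: R_def add_pos_nonneg)
  have "R * (1 + 2*\<mu> - 2 * sqrt (\<mu>\<^sup>2 + \<mu>)) = 1"
    unfolding R_def using q by (simp add: algebra_simps power2_eq_square)
  then have "1/R = 1 + 2*\<mu> - 2 * sqrt (\<mu>\<^sup>2 + \<mu>)"
    using \<open>1 < R\<close> by (simp add: field_simps)
  then show "(1/R + R) / 2 = 1 + 2*\<mu>"
    by (simp add: R_def)
qed

lemma pi_div_ln_half_annulus_radius_le_2:
  fixes \<mu> :: real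
  assumes "1 \<le> \<mu>"
  shows "pi / ln (1 + 2*\<mu> + 2 * sqrt (\<mu>\<^sup>2 + \<mu>)) \<le> 2"
proof -
  have "exp (pi/4) \<le> 1 + pi/4 + (pi/4)\<^sup>2"
    using pi_approx pi_gt3 by (intro exp_bound) auto
  also have "\<dots> \<le> 2.4024"
  proof -
    have "pi/4 \<le> 0.7854"
      using pi_approx by simp
    moreover from this have "(pi/4)\<^sup>2 \<le> 0.7854\<^sup>2"
      using pi_gt_zero by (intro power_mono) auto
    ultimately show ?thesis
      by (simp add: power2_eq_square)
  qed
  finally have "exp (pi/2) \<le> 2.4024 * 2.4024"
    using mult_mono[of "exp (pi/4)" "2.4024" "exp (pi/4)" "2.4024"] by (simp flip: exp_add)
  also have "\<dots> \<le> 1 + 2 + 2 * 1.414"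
    by simp
  also have "\<dots> \<le> 1 + 2*\<mu> + 2 * sqrt (\<mu>\<^sup>2 + \<mu>)"
  proof -
    have "1.414 \<le> sqrt 2"
      by (rule real_le_rsqrt) (simp add: power2_eq_square)
    also have "\<dots> \<le> sqrt (\<mu>\<^sup>2 + \<mu>)"
    proof -
      have "1 \<le> \<mu>\<^sup>2"
        using assms by (rule one_le_power)
      then show ?thesis
        using assms by (intro real_sqrt_le_mono) linarith
    qed
    finally show ?thesis
      using assms by simp
  qed
  finally have "pi/2 \<le> ln (1 + 2*\<mu> + 2 * sqrt (\<mu>\<^sup>2 + \<mu>))"
    using assms by (subst ln_ge_iff) (auto intro: add_pos_nonneg)
  moreover have "0 < ln (1 + 2*\<mu> + 2 * sqrt (\<mu>\<^sup>2 + \<mu>))"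
    using calculation pi_gt_zero by linarith
  ultimately show ?thesis
    by (simp add: divide_le_eq)
qed

lemma arc_cross_ratio_eq_cot:
  fixes t1 t2 t3 t4 :: real
  assumes t: "t1 < t2" "t2 < t3" "t3 < t4" "t4 < t1 + 2*pi"
  shows "arc_cross_ratio t1 t2 t3 t4 =
    (cot ((t4 - t2)/2) - cot ((t4 - t1)/2)) / (cot ((t4 - t3)/2) - cot ((t4 - t2)/2))"
proof -
  have sin_pos: "0 < sin ((t4 - s)/2)" if "t1 \<le> s" "s < t4" for s
    using that t by (intro sin_gt_zero) auto
  have cot_diff': "cot ((t4 - s')/2) - cot ((t4 - s)/2) = sin ((s' - s)/2) / (sin ((t4 - s')/2) * sin ((t4 - s)/2))"
    if "t1 \<le> s" "s < t4" "t1 \<le> s'" "s' < t4" for s s'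
  proof -
    have "cot ((t4 - s')/2) - cot ((t4 - s)/2)
        = sin ((t4 - s)/2 - (t4 - s')/2) / (sin ((t4 - s')/2) * sin ((t4 - s)/2))"
      by (rule cot_diff) (use sin_pos[of s] sin_pos[of s'] that in auto)
    moreover have "(t4 - s)/2 - (t4 - s')/2 = (s' - s)/2"
      by (simp add: field_simps)
    ultimately show ?thesis
      by simp
  qed
  have "0 < sin ((t2 - t1)/2)" "0 < sin ((t3 - t2)/2)"
    using t by (auto intro: sin_gt_zero)
  then show ?thesis
    using t sin_pos[of t1] sin_pos[of t2] sin_pos[of t3]
    by (simp add: arc_cross_ratio_def cot_diff')
qed

lemma extremal_width_opposite_arcs_le:
  fixes t1 t2 t3 t4 :: real
  assumes t: "t1 < t2" "t2 < t3" "t3 < t4" "t4 < t1 + 2*pi"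
  defines "\<mu> \<equiv> arc_cross_ratio t1 t2 t3 t4"
  shows "extremal_width (joining_paths (cis ` {t2..t3}) (cis ` {t4..t1 + 2*pi}))
           \<le> ennreal (pi / ln (1 + 2*\<mu> + 2 * sqrt (\<mu>\<^sup>2 + \<mu>)))"
proof -
  define c where "c s = cot ((t4 - s)/2)" for s
  have c_less: "c t1 < c t2" "c t2 < c t3"
    using t by (auto simp: c_def intro!: cot_half_angle_strict_mono)
  have \<mu>: "\<mu> = (c t2 - c t1) / (c t3 - c t2)"
    unfolding \<mu>_def c_def by (rule arc_cross_ratio_eq_cot[OF t])
  then have "0 < \<mu>"
    using c_less by simp
  \<comment> \<open>\<open>\<alpha> x + \<beta>\<close> sends \<open>c t2\<close>, \<open>c t3\<close>, \<open>c t1\<close> to -1, 1, \<open>-1 - 2\<mu>\<close>, and \<open>\<tau> = 1/R\<close> solves \<open>(\<tau> + 1/\<tau>)/2 = 1 + 2\<mu>\<close>.\<close>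
  define R where "R = 1 + 2*\<mu> + 2 * sqrt (\<mu>\<^sup>2 + \<mu>)"
  have R: "1 < R" "(1/R + 1/(1/R)) / 2 = 1 + 2*\<mu>"
    using half_annulus_radius[OF \<open>0 < \<mu>\<close>] by (simp_all add: R_def)
  define \<alpha> where "\<alpha> = 2 / (c t3 - c t2)"
  define \<beta> where "\<beta> = - (c t2 + c t3) / (c t3 - c t2)"
  have "c t3 - c t2 \<noteq> 0"
    using c_less by simp
  then have affine: "\<alpha> * x + \<beta> = (2*x - c t2 - c t3) / (c t3 - c t2)" for x
    by (simp add: \<alpha>_def \<beta>_def add_divide_distrib diff_divide_distrib)
  have "0 < \<alpha>" "0 < 1/R" "1/R < 1"
    using c_less R by (auto simp: \<alpha>_def)
  obtain n1 n0 d1 d0 :: complex where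
    det: "n1*d0 - n0*d1 \<noteq> 0" and
    half_plane: "\<And>z. cmod z < 1 \<Longrightarrow> d1*z+d0 \<noteq> 0 \<and> 0 < Im ((n1*z+n0)/(d1*z+d0))" and
    inner: "\<And>s. sin ((t4 - s)/2) \<noteq> 0 \<Longrightarrow> \<bar>\<alpha> * cot ((t4 - s)/2) + \<beta>\<bar> \<le> 1 \<Longrightarrow>
       cmod (n1 * cis s + n0) \<le> cmod (d1 * cis s + d0)" and
    outer: "\<And>s. sin ((t4 - s)/2) \<noteq> 0 \<Longrightarrow> \<alpha> * cot ((t4 - s)/2) + \<beta> \<le> - (1/R + 1/(1/R)) / 2 \<Longrightarrow>
       cmod (d1 * cis s + d0) \<le> 1/R * cmod (n1 * cis s + n0)" and
    outer_end: "cmod (d1 * cis t4 + d0) \<le> 1/R * cmod (n1 * cis t4 + n0)"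
    by (rule mobius_separating_arcs[OF \<open>0 < \<alpha>\<close> \<open>0 < 1/R\<close> \<open>1/R < 1\<close>]) blast
  have "extremal_width (joining_paths (cis ` {t2..t3}) (cis ` {t4..t1 + 2*pi})) \<le> ennreal (pi / ln (R/1))"
  proof (rule extremal_width_le_half_annulus[OF det half_plane _ \<open>1 < R\<close>])
    fix z assume "z \<in> cis ` {t2..t3}"
    then obtain s where s: "s \<in> {t2..t3}" "z = cis s"
      by auto
    have "c t2 \<le> c s" "c s \<le> c t3"
      using s t by (auto simp: c_def intro!: cot_half_angle_mono)
    then have "\<bar>\<alpha> * c s + \<beta>\<bar> \<le> 1"
      using c_less by (simp add: affine abs_le_iff divide_le_eq le_divide_eq)
    moreover have "sin ((t4 - s)/2) \<noteq> 0"
      using s t sin_gt_zero[of "(t4 - s)/2"] by auto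
    ultimately show "cmod (n1*z+n0) \<le> 1 * cmod (d1*z+d0)"
      using inner s(2) by (simp add: c_def)
  next
    fix z assume "z \<in> cis ` {t4..t1 + 2*pi}"
    then obtain s where s: "s \<in> {t4..t1 + 2*pi}" "z = cis s"
      by auto
    have "cmod (d1 * cis s + d0) \<le> 1/R * cmod (n1 * cis s + n0)"
    proof (cases "s = t4")
      case False
      then have wrap: "sin ((t4 - s)/2) \<noteq> 0" "c s \<le> c t1"
        using cot_half_angle_le_wrap[of t4 s t1] s t by (auto simp: c_def)
      then have "\<alpha> * c s + \<beta> \<le> \<alpha> * c t1 + \<beta>"
        using \<open>0 < \<alpha>\<close> by simp
      also have "\<dots> = (2 * c t1 - c t2 - c t3) / (c t3 - c t2)"
        by (rule affine)
      also have "\<dots> = - 1 - 2*\<mu>"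
        unfolding \<mu> using \<open>c t3 - c t2 \<noteq> 0\<close> by (simp add: field_simps)
      also have "\<dots> = - (1/R + 1/(1/R)) / 2"
        using R(2) by linarith
      finally have "\<alpha> * cot ((t4 - s)/2) + \<beta> \<le> - (1/R + 1/(1/R)) / 2"
        by (simp only: c_def)
      with wrap(1) show ?thesis
        by (rule outer)
    qed (use outer_end in simp)
    then show "R * cmod (d1*z+d0) \<le> cmod (n1*z+n0)"
      using R s(2) by (simp add: field_simps)
  qed simp_all
  then show ?thesis
    by (simp add: R_def)
qed

lemma extremal_width_opposite_arcs_le_2:
  fixes t1 t2 t3 t4 :: real
  assumes "t1 < t2" "t2 < t3" "t3 < t4" "t4 < t1 + 2*pi" "1 \<le> arc_cross_ratio t1 t2 t3 t4"
  shows "extremal_width (joining_paths (cis ` {t2..t3}) (cis ` {t4..t1 + 2*pi})) \<le> 2"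
proof -
  have "pi / ln (1 + 2 * arc_cross_ratio t1 t2 t3 t4 + 2 * sqrt ((arc_cross_ratio t1 t2 t3 t4)\<^sup>2 + arc_cross_ratio t1 t2 t3 t4)) \<le> 2"
    using assms(5) by (rule pi_div_ln_half_annulus_radius_le_2)
  then show ?thesis
    using extremal_width_opposite_arcs_le[OF assms(1-4)] by (metis ennreal_leI ennreal_numeral order_trans)
qed

lemma extremal_width_mono:
  assumes "X \<subseteq> X'" "Y \<subseteq> Y'"
  shows "extremal_width (joining_paths X Y) \<le> extremal_width (joining_paths X' Y')"
proof -
  have "joining_paths X Y \<subseteq> joining_paths X' Y'"
    using assms unfolding joining_paths_def by auto
  then have "{\<rho>. admissible_metric (joining_paths X' Y') \<rho>} \<subseteq> {\<rho>. admissible_metric (joining_paths X Y) \<rho>}"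
    unfolding admissible_metric_def by auto
  then show ?thesis
    unfolding extremal_width_def by (rule INF_superset_mono) simp
qed

lemma ideal_marking_less:
  assumes "ideal_marking p \<theta>" "i < j" "j \<le> p"
  shows "\<theta> i < \<theta> j"
  using assms(2,3)
proof (induction j)
  case (Suc j)
  have "\<theta> j < \<theta> (Suc j)"
    using assms(1) Suc.prems unfolding ideal_marking_def by auto
  then show ?case
    using Suc by (cases "i = j") auto
qed simp

lemma ideal_marking_le:
  assumes "ideal_marking p \<theta>" "i \<le> j" "j \<le> p"
  shows "\<theta> i \<le> \<theta> j"
  using ideal_marking_less[OF assms(1)] assms(2,3) by (cases "i = j") (auto intro: less_imp_le)

(* The two quadrilaterals have reciprocal cross-ratios (arc_cross_ratio_rotate), so one of
   them is at least 1 and the corresponding width is at most 2. *)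
lemma crossing_not_both_wide:
  assumes \<theta>: "ideal_marking p \<theta>" and idx: "m < k" "k < n" "n < l" "l < p"
  shows "\<not> (2 < extremal_width (joining_paths (marking_arc \<theta> m) (marking_arc \<theta> n)) \<and>
            2 < extremal_width (joining_paths (marking_arc \<theta> k) (marking_arc \<theta> l)))"
proof -
  define t1 t2 t3 t4 where "t1 = \<theta> m" "t2 = \<theta> (Suc m)" "t3 = \<theta> n" "t4 = \<theta> (Suc n)"
  have "\<theta> p = \<theta> 0 + 2*pi" "\<theta> 0 \<le> \<theta> m"
    using \<theta> ideal_marking_le[OF \<theta>, of 0 m] idx by (auto simp: ideal_marking_def)
  moreover have "\<theta> m < \<theta> (Suc m)" "\<theta> (Suc m) < \<theta> n" "\<theta> n < \<theta> (Suc n)" "\<theta> (Suc n) < \<theta> p"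
    using ideal_marking_less[OF \<theta>, of m "Suc m"] ideal_marking_less[OF \<theta>, of "Suc m" n]
      ideal_marking_less[OF \<theta>, of n "Suc n"] ideal_marking_less[OF \<theta>, of "Suc n" p] idx
    by auto
  ultimately have t: "t1 < t2" "t2 < t3" "t3 < t4" "t4 < t1 + 2*pi"
    by (auto simp: t1_t2_t3_t4_def)
  have "\<theta> (Suc m) \<le> \<theta> k" "\<theta> (Suc k) \<le> \<theta> n"
    using ideal_marking_le[OF \<theta>, of "Suc m" k] ideal_marking_le[OF \<theta>, of "Suc k" n] idx by auto
  then have arc_k: "marking_arc \<theta> k \<subseteq> cis ` {t2..t3}"
    unfolding marking_arc_def t1_t2_t3_t4_def by (intro image_mono) auto
  have "\<theta> (Suc n) \<le> \<theta> l" "\<theta> (Suc l) \<le> \<theta> m + 2*pi"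
    using ideal_marking_le[OF \<theta>, of "Suc n" l] ideal_marking_le[OF \<theta>, of "Suc l" p] idx
      \<open>\<theta> p = \<theta> 0 + 2*pi\<close> \<open>\<theta> 0 \<le> \<theta> m\<close>
    by auto
  then have arc_l: "marking_arc \<theta> l \<subseteq> cis ` {t4..t1 + 2*pi}"
    unfolding marking_arc_def t1_t2_t3_t4_def by (intro image_mono) auto
  have arc_m: "marking_arc \<theta> m = cis ` {t1..t2}"
    and arc_n: "marking_arc \<theta> n = cis ` {t3..(t4 - 2*pi) + 2*pi}"
    by (simp_all add: marking_arc_def t1_t2_t3_t4_def)
  have "0 < sin ((t2-t1)/2)" "0 < sin ((t4-t3)/2)" "0 < sin ((t3-t2)/2)" "0 < sin ((t4-t1)/2)"
    using t by (auto intro!: sin_gt_zero)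
  then have "0 < arc_cross_ratio t1 t2 t3 t4"
    by (simp add: arc_cross_ratio_def)
  show ?thesis
  proof (cases "1 \<le> arc_cross_ratio t1 t2 t3 t4")
    case True
    have "extremal_width (joining_paths (marking_arc \<theta> k) (marking_arc \<theta> l)) \<le> 2"
      using extremal_width_mono[OF arc_k arc_l] extremal_width_opposite_arcs_le_2[OF t True]
      by (rule order_trans)
    then show ?thesis
      by (simp add: not_less)
  next
    case False
    then have "1 \<le> arc_cross_ratio (t4 - 2*pi) t1 t2 t3"
      using \<open>0 < arc_cross_ratio t1 t2 t3 t4\<close> by (simp add: arc_cross_ratio_rotate)
    then have "extremal_width (joining_paths (marking_arc \<theta> m) (marking_arc \<theta> n)) \<le> 2"
      unfolding arc_m arc_n using t by (intro extremal_width_opposite_arcs_le_2) auto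
    then show ?thesis
      by (simp add: not_less)
  qed
qed

section \<open>Counting non-crossing families of intervals\<close>

definition non_crossing :: "(nat \<times> nat) set \<Rightarrow> bool" where
  "non_crossing F \<longleftrightarrow> (\<forall>(a, b) \<in> F. \<forall>(c, d) \<in> F. \<not> (a < c \<and> c < b \<and> b < d))"

(* Counting argument: every member (a, b) of a non-crossing family contains a point of
   ]a, b[ that lies strictly inside no other member contained in [a, b], and these points are distinct. *)
definition covered_inside :: "(nat \<times> nat) set \<Rightarrow> nat \<times> nat \<Rightarrow> nat \<Rightarrow> bool" where
  "covered_inside F I x \<longleftrightarrow>
     (\<exists>(a, b) \<in> F. (a, b) \<noteq> I \<and> fst I \<le> a \<and> b \<le> snd I \<and> a < x \<and> x < b)"

lemma non_crossing_uncovered_point: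
  assumes F: "non_crossing F" "\<forall>(a, b) \<in> F. a + 2 \<le> b" and I: "(a, b) \<in> F"
  obtains x where "a < x" "x < b" "\<not> covered_inside F (a, b) x"
proof (rule ccontr)
  assume "\<not> thesis"
  with that have cov: "covered_inside F (a, b) x" if "a < x" "x < b" for x
    using that by blast
  define S where "S = {b'. (a, b') \<in> F \<and> b' < b}"
  have "a + 2 \<le> b"
    using F(2) I by auto
  then obtain a' b' where "(a', b') \<in> F" "(a', b') \<noteq> (a, b)" "a \<le> a'" "b' \<le> b" "a' < a + 1" "a + 1 < b'"
    using cov[of "a + 1"] unfolding covered_inside_def by auto
  then have "a' = a"
    by simp
  with \<open>(a', b') \<in> F\<close> \<open>(a', b') \<noteq> (a, b)\<close> \<open>b' \<le> b\<close> have "b' \<in> S"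
    by (auto simp: S_def)
  have "finite S"
    unfolding S_def by (rule finite_subset[of _ "{..<b}"]) auto
  define b1 where "b1 = Max S"
  have "b1 \<in> S" and b1_max: "\<And>x. x \<in> S \<Longrightarrow> x \<le> b1"
    using \<open>finite S\<close> \<open>b' \<in> S\<close> unfolding b1_def by (auto intro: Max_in)
  then have "(a, b1) \<in> F" "b1 < b" "a + 2 \<le> b1"
    using F(2) by (auto simp: S_def)
  then obtain a2 b2 where "(a2, b2) \<in> F" "(a2, b2) \<noteq> (a, b)" "a \<le> a2" "b2 \<le> b" "a2 < b1" "b1 < b2"
    using cov[of b1] unfolding covered_inside_def by auto
  show False
  proof (cases "a2 = a")
    case True
    then have "b2 \<in> S"
      using \<open>(a2, b2) \<in> F\<close> \<open>(a2, b2) \<noteq> (a, b)\<close> \<open>b2 \<le> b\<close> by (auto simp: S_def)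
    then show False
      using b1_max \<open>b1 < b2\<close> by (auto simp: not_le[symmetric])
  next
    case False
    then have "a < a2"
      using \<open>a \<le> a2\<close> by simp
    then show False
      using F(1) \<open>(a, b1) \<in> F\<close> \<open>(a2, b2) \<in> F\<close> \<open>a2 < b1\<close> \<open>b1 < b2\<close>
      unfolding non_crossing_def by blast
  qed
qed

lemma card_non_crossing_le:
  fixes F :: "(nat \<times> nat) set"
  assumes F: "non_crossing F" "\<forall>(a, b) \<in> F. a + 2 \<le> b \<and> b \<le> N"
  shows "card F \<le> N - 1"
proof -
  have "\<exists>x. fst I < x \<and> x < snd I \<and> \<not> covered_inside F I x" if "I \<in> F" for I
  proof -
    obtain a b where I: "I = (a, b)"
      by force
    have "\<forall>(a, b) \<in> F. a + 2 \<le> b"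
      using F(2) by auto
    from non_crossing_uncovered_point[OF F(1) this that[unfolded I]] show ?thesis
      unfolding I by auto
  qed
  then obtain point where point: "\<And>I. I \<in> F \<Longrightarrow> fst I < point I \<and> point I < snd I \<and> \<not> covered_inside F I (point I)"
    by metis
  have "inj_on point F"
  proof (rule inj_onI)
    fix I J assume "I \<in> F" "J \<in> F" "point I = point J"
    obtain a b c d where I: "I = (a, b)" and J: "J = (c, d)"
      by force
    define x where "x = point I"
    have x: "a < x" "x < b" "c < x" "x < d" and uncovered: "\<not> covered_inside F I x" "\<not> covered_inside F J x"
      using point[OF \<open>I \<in> F\<close>] point[OF \<open>J \<in> F\<close>] \<open>point I = point J\<close> by (simp_all add: x_def I J)
    show "I = J"
    proof (rule ccontr)
      assume "I \<noteq> J"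
      have "\<not> (a \<le> c \<and> d \<le> b)"
        using uncovered(1) \<open>J \<in> F\<close> \<open>I \<noteq> J\<close> x unfolding covered_inside_def I J by auto
      moreover have "\<not> (c \<le> a \<and> b \<le> d)"
        using uncovered(2) \<open>I \<in> F\<close> \<open>I \<noteq> J\<close> x unfolding covered_inside_def I J by auto
      moreover have "\<not> (a < c \<and> c < b \<and> b < d)" "\<not> (c < a \<and> a < d \<and> d < b)"
        using F(1) \<open>I \<in> F\<close> \<open>J \<in> F\<close> unfolding non_crossing_def I J by auto
      ultimately show False
        using x by linarith
    qed
  qed
  moreover have "point ` F \<subseteq> {1..<N}"
    using point F(2) by fastforce
  ultimately have "card F \<le> card {1..<N}"
    by (metis card_image card_mono finite_atLeastLessThan)
  then show ?thesis
    by simp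
qed

theorem corollary3p4:
  fixes p :: nat and \<theta> :: "nat \<Rightarrow> real"
  assumes "ideal_marking p \<theta>"
  shows "card {(m, n). m < n \<and> n < p \<and> \<not> adjacent_mod p m n \<and>
            extremal_width (joining_paths (marking_arc \<theta> m) (marking_arc \<theta> n)) > 2} \<le> p - 2"
proof -
  let ?F = "{(m, n). m < n \<and> n < p \<and> \<not> adjacent_mod p m n \<and>
            extremal_width (joining_paths (marking_arc \<theta> m) (marking_arc \<theta> n)) > 2}"
  have "\<forall>(m, n) \<in> ?F. m + 2 \<le> n \<and> n \<le> p - 1"
    by (auto simp: adjacent_mod_def)
  moreover have "non_crossing ?F"
    using crossing_not_both_wide[OF assms] unfolding non_crossing_def by fastforce
  ultimately have "card ?F \<le> p - 1 - 1"
    by (intro card_non_crossing_le) auto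
  then show ?thesis
    by simp
qed

end
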